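(* Let $S$ be a finite, additively commutative, congruence-simple semiring with an infinity $\infty$ and with $|S|>2$. Then one of the following holds: (1) $S$ is additively idempotent, i.e. $x+x=x$ for all $x\in S$; (2) $x+y=\infty$ for all $x,y\in S$, and $(S,\cdot)$ is a congruence-free semigroup.
   Context: A semiring is a nonempty set $S$ with two associative binary operations $+$ and $\cdot$ satisfying both distributive laws $a(b+c)=ab+ac$ and $(a+b)c=ac+bc$; no identity elements are assumed. It is additively commutative if $(S,+)$ is commutative. An infinity of $S$ is an element $\infty$ with $\infty+x=x+\infty=\infty$ and $\infty x=x\infty=\infty$ for all $x\in S$. A congruence relation on $S$ is an equivalence relation $\sim$ such that $x_1\sim x_2$ implies $c+x_1\sim c+x_2$, $x_1+c\sim x_2+c$, $cx_1\sim cx_2$, $x_1c\sim x_2c$ for all $c\in S$. $S$ is congruence-simple if its only congruence relations are the identity relation and $S\times S$. A semigroup is congruence-free if its only congruences (equivalence relations compatible with left and right multiplication) are the identity relation and the full relation. *)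

theory Defs
  imports Main
begin

definition semiring_on :: "'a set \<Rightarrow> ('a \<Rightarrow> 'a \<Rightarrow> 'a) \<Rightarrow> ('a \<Rightarrow> 'a \<Rightarrow> 'a) \<Rightarrow> bool" where
  "semiring_on S add mul \<longleftrightarrow> S \<noteq> {} \<and>
     (\<forall>x\<in>S. \<forall>y\<in>S. add x y \<in> S \<and> mul x y \<in> S) \<and>
     (\<forall>x\<in>S. \<forall>y\<in>S. \<forall>z\<in>S. add (add x y) z = add x (add y z)) \<and>
     (\<forall>x\<in>S. \<forall>y\<in>S. \<forall>z\<in>S. mul (mul x y) z = mul x (mul y z)) \<and>
     (\<forall>a\<in>S. \<forall>b\<in>S. \<forall>c\<in>S. mul a (add b c) = add (mul a b) (mul a c)) \<and>
     (\<forall>a\<in>S. \<forall>b\<in>S. \<forall>c\<in>S. mul (add a b) c = add (mul a c) (mul b c))"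

definition add_commutative_on :: "'a set \<Rightarrow> ('a \<Rightarrow> 'a \<Rightarrow> 'a) \<Rightarrow> bool" where
  "add_commutative_on S add \<longleftrightarrow> (\<forall>x\<in>S. \<forall>y\<in>S. add x y = add y x)"

definition is_infinity :: "'a set \<Rightarrow> ('a \<Rightarrow> 'a \<Rightarrow> 'a) \<Rightarrow> ('a \<Rightarrow> 'a \<Rightarrow> 'a) \<Rightarrow> 'a \<Rightarrow> bool" where
  "is_infinity S add mul w \<longleftrightarrow> w \<in> S \<and>
     (\<forall>x\<in>S. add w x = w \<and> add x w = w \<and> mul w x = w \<and> mul x w = w)"

definition semiring_congruence :: "'a set \<Rightarrow> ('a \<Rightarrow> 'a \<Rightarrow> 'a) \<Rightarrow> ('a \<Rightarrow> 'a \<Rightarrow> 'a) \<Rightarrow> 'a rel \<Rightarrow> bool" where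
  "semiring_congruence S add mul R \<longleftrightarrow> equiv S R \<and>
     (\<forall>x1 x2 c. (x1, x2) \<in> R \<and> c \<in> S \<longrightarrow>
        (add c x1, add c x2) \<in> R \<and> (add x1 c, add x2 c) \<in> R \<and>
        (mul c x1, mul c x2) \<in> R \<and> (mul x1 c, mul x2 c) \<in> R)"

definition congruence_simple :: "'a set \<Rightarrow> ('a \<Rightarrow> 'a \<Rightarrow> 'a) \<Rightarrow> ('a \<Rightarrow> 'a \<Rightarrow> 'a) \<Rightarrow> bool" where
  "congruence_simple S add mul \<longleftrightarrow>
     (\<forall>R. semiring_congruence S add mul R \<longrightarrow> R = Id_on S \<or> R = S \<times> S)"

definition semigroup_congruence :: "'a set \<Rightarrow> ('a \<Rightarrow> 'a \<Rightarrow> 'a) \<Rightarrow> 'a rel \<Rightarrow> bool" where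
  "semigroup_congruence S mul R \<longleftrightarrow> equiv S R \<and>
     (\<forall>x1 x2 c. (x1, x2) \<in> R \<and> c \<in> S \<longrightarrow>
        (mul c x1, mul c x2) \<in> R \<and> (mul x1 c, mul x2 c) \<in> R)"

definition congruence_free :: "'a set \<Rightarrow> ('a \<Rightarrow> 'a \<Rightarrow> 'a) \<Rightarrow> bool" where
  "congruence_free S mul \<longleftrightarrow>
     (\<forall>R. semigroup_congruence S mul R \<longrightarrow> R = Id_on S \<or> R = S \<times> S)"

end

theory Submission
  imports Defs "HOL-Library.FuncSet"
begin

text \<open>
  The sumset \<open>S + S\<close> absorbs both operations, so its Rees congruence is the identity or
  total: either \<open>S + S\<close> is the single element \<open>\<infinity>\<close>, or \<open>S + S = S\<close>. In the first case
  addition is constant, and then every congruence of \<open>(S, \<cdot>)\<close> is a semiring congruence.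
  In the second case finiteness gives an \<open>n\<close> such that \<open>n x\<close> is additively idempotent and
  \<open>n (n x) = n x\<close> for all \<open>x\<close>; the kernel of \<open>x \<mapsto> n x\<close> is a semiring congruence. If it
  is the identity, then \<open>n x = x\<close> and so \<open>x + x = x\<close>. If it is total, then \<open>n x = \<infinity>\<close> for
  all \<open>x\<close>; but every \<open>x \<noteq> \<infinity>\<close> is a sum with a summand \<open>\<noteq> \<infinity>\<close>, so by finiteness some
  \<open>x \<noteq> \<infinity>\<close> satisfies \<open>x = t + x\<close>, whence \<open>x = n t + x = \<infinity>\<close>.
\<close>

locale semiring_carrier =
  fixes S :: "'a set" and add mul :: "'a \<Rightarrow> 'a \<Rightarrow> 'a"
  assumes semiring: "semiring_on S add mul"
begin

lemma add_closed: "x \<in> S \<Longrightarrow> y \<in> S \<Longrightarrow> add x y \<in> S"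
  and mul_closed: "x \<in> S \<Longrightarrow> y \<in> S \<Longrightarrow> mul x y \<in> S"
  and add_assoc: "x \<in> S \<Longrightarrow> y \<in> S \<Longrightarrow> z \<in> S \<Longrightarrow> add (add x y) z = add x (add y z)"
  and distrib_left: "x \<in> S \<Longrightarrow> y \<in> S \<Longrightarrow> z \<in> S \<Longrightarrow> mul x (add y z) = add (mul x y) (mul x z)"
  and distrib_right: "x \<in> S \<Longrightarrow> y \<in> S \<Longrightarrow> z \<in> S \<Longrightarrow> mul (add x y) z = add (mul x z) (mul y z)"
  using semiring unfolding semiring_on_def by blast+

text \<open>There is no zero, so \<open>multiple n x\<close> is the \<open>(n + 1)\<close>-fold sum \<open>x + \<dots> + x\<close>.\<close>
primrec multiple :: "nat \<Rightarrow> 'a \<Rightarrow> 'a" where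
  "multiple 0 x = x"
| "multiple (Suc n) x = add x (multiple n x)"

lemma multiple_closed: "x \<in> S \<Longrightarrow> multiple n x \<in> S"
  by (induction n) (simp_all add: add_closed)

lemma multiple_Suc_add:
  assumes "x \<in> S"
  shows "multiple (Suc (m + n)) x = add (multiple m x) (multiple n x)"
proof (induction m)
  case 0
  show ?case by simp
next
  case (Suc m)
  then show ?case
    using assms by (simp add: add_assoc multiple_closed)
qed

lemma multiple_multiple:
  assumes "x \<in> S"
  shows "multiple m (multiple n x) = multiple (m * n + m + n) x"
proof (induction m)
  case 0
  show ?case by simp
next
  case (Suc m)
  then have "multiple (Suc m) (multiple n x) = multiple (Suc (n + (m * n + m + n))) x"
    using multiple_Suc_add[OF assms] by simp
  then show ?case by (simp add: algebra_simps)
qed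

lemma mul_multiple_left: "x \<in> S \<Longrightarrow> c \<in> S \<Longrightarrow> mul c (multiple n x) = multiple n (mul c x)"
  by (induction n) (simp_all add: distrib_left multiple_closed)

lemma mul_multiple_right: "x \<in> S \<Longrightarrow> c \<in> S \<Longrightarrow> mul (multiple n x) c = multiple n (mul x c)"
  by (induction n) (simp_all add: distrib_right multiple_closed)

lemma multiple_infinity: "is_infinity S add mul w \<Longrightarrow> multiple n w = w"
  by (induction n) (simp_all add: is_infinity_def)

lemma fixed_by_add_multiple:
  assumes "t \<in> S" "x \<in> S" "x = add t x"
  shows "x = add (multiple n t) x"
proof (induction n)
  case 0
  show ?case using assms(3) by simp
next
  case (Suc n)
  then show ?case
    using assms by (simp add: add_assoc multiple_closed)
qed

lemma exists_multiple_eq: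
  assumes "finite S"
  obtains a b where "a < b" "\<And>x. x \<in> S \<Longrightarrow> multiple a x = multiple b x"
proof -
  define F where "F n = restrict (multiple n) S" for n
  have "range F \<subseteq> S \<rightarrow>\<^sub>E S"
    using multiple_closed unfolding F_def by auto
  then have "finite (range F)"
    by (rule finite_subset) (simp add: assms finite_PiE)
  then have "\<not> inj F"
    using finite_imageD infinite_UNIV_nat by blast
  then obtain a b where "a < b" "F a = F b"
    unfolding inj_def by (metis linorder_neqE_nat)
  then show ?thesis
    using that unfolding F_def by (metis restrict_apply')
qed

lemma multiple_periodic:
  assumes "a < b" and eq: "\<And>x. x \<in> S \<Longrightarrow> multiple a x = multiple b x"
    and "x \<in> S" "c \<ge> a"
  shows "multiple (c + k * (b - a)) x = multiple c x"
proof -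
  have step: "multiple (c' + (b - a)) x = multiple c' x" if "c' \<ge> a" for c'
  proof (cases "c' = a")
    case True
    then show ?thesis using eq[OF \<open>x \<in> S\<close>] \<open>a < b\<close> by simp
  next
    case False
    with \<open>c' \<ge> a\<close> obtain d where d: "c' = Suc (a + d)"
      by (metis le_neq_implies_less less_iff_Suc_add)
    with \<open>a < b\<close> have "c' + (b - a) = Suc (b + d)"
      by simp
    then have "multiple (c' + (b - a)) x = add (multiple b x) (multiple d x)"
      by (simp only: multiple_Suc_add[OF \<open>x \<in> S\<close>])
    also have "\<dots> = add (multiple a x) (multiple d x)"
      by (simp only: eq[OF \<open>x \<in> S\<close>])
    also have "\<dots> = multiple c' x"
      by (simp only: d multiple_Suc_add[OF \<open>x \<in> S\<close>])
    finally show ?thesis .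
  qed
  show ?thesis
  proof (induction k)
    case 0
    show ?case by simp
  next
    case (Suc k)
    have "multiple (c + Suc k * (b - a)) x = multiple ((c + k * (b - a)) + (b - a)) x"
      by (simp add: ac_simps)
    also have "\<dots> = multiple (c + k * (b - a)) x"
      using step \<open>c \<ge> a\<close> by simp
    finally show ?case
      using Suc by simp
  qed
qed

text \<open>\<open>N\<close> is chosen past the preperiod with \<open>N + 1\<close> a multiple of the period.\<close>
lemma exists_idempotent_multiple:
  assumes "finite S"
  obtains N where "\<And>x. x \<in> S \<Longrightarrow> multiple N (multiple N x) = multiple N x"
    and "\<And>x. x \<in> S \<Longrightarrow> add (multiple N x) (multiple N x) = multiple N x"
proof -
  obtain a b where "a < b" and eq: "\<And>x. x \<in> S \<Longrightarrow> multiple a x = multiple b x"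
    using exists_multiple_eq[OF assms] by metis
  define p where "p = b - a"
  obtain q where "p = Suc q"
    using \<open>a < b\<close> unfolding p_def by (metis Suc_diff_Suc)
  define N where "N = q + a * p"
  have SucN: "Suc N = Suc a * p"
    unfolding N_def \<open>p = Suc q\<close> by simp
  have "N \<ge> a"
    unfolding N_def \<open>p = Suc q\<close> by simp
  have N_period: "multiple (N + k * Suc N) x = multiple N x" if "x \<in> S" for x k
    using multiple_periodic[OF \<open>a < b\<close> eq that \<open>N \<ge> a\<close>, of "k * Suc a"]
    unfolding SucN p_def by (simp only: mult.assoc)
  show ?thesis
  proof (rule that)
    fix x
    assume "x \<in> S"
    have "N * N + N + N = N + N * Suc N" and "Suc (N + N) = N + 1 * Suc N"
      by simp_all
    then show "multiple N (multiple N x) = multiple N x"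
      and "add (multiple N x) (multiple N x) = multiple N x"
      using multiple_multiple[OF \<open>x \<in> S\<close>, of N N] multiple_Suc_add[OF \<open>x \<in> S\<close>, of N N]
        N_period[OF \<open>x \<in> S\<close>] by metis+
  qed
qed

lemma exists_add_fixed_point:
  assumes "finite X" "X \<subseteq> S" "X \<noteq> {}"
    and split: "\<And>x. x \<in> X \<Longrightarrow> \<exists>u\<in>S. \<exists>v\<in>X. x = add u v"
  obtains x t where "x \<in> X" "t \<in> S" "x = add t x"
proof -
  define r where "r = {(y, x). y \<in> X \<and> x \<in> X \<and> (\<exists>t\<in>S. x = add t y)}"
  have "trans r"
  proof (rule transI)
    fix x y z
    assume "(x, y) \<in> r" "(y, z) \<in> r"
    then obtain s t where "s \<in> S" "t \<in> S" "x \<in> X" "z \<in> X" "z = add t (add s x)"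
      unfolding r_def by auto
    moreover have "x \<in> S"
      using \<open>x \<in> X\<close> assms(2) by blast
    ultimately have "z = add (add t s) x" "add t s \<in> S"
      by (simp_all add: add_assoc add_closed)
    then show "(x, z) \<in> r"
      using \<open>x \<in> X\<close> \<open>z \<in> X\<close> unfolding r_def by blast
  qed
  have "\<not> wf r"
  proof
    assume "wf r"
    then obtain z where "z \<in> X" and "\<And>y. (y, z) \<in> r \<Longrightarrow> y \<notin> X"
      using \<open>X \<noteq> {}\<close> by (metis ex_in_conv wfE_min)
    then show False
      using split[OF \<open>z \<in> X\<close>] unfolding r_def by blast
  qed
  moreover have "finite r"
    using finite_subset[of r "X \<times> X"] assms(1) unfolding r_def by blast
  ultimately have "\<not> acyclic r"
    using finite_acyclic_wf by blast
  then obtain x where "(x, x) \<in> r"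
    using trancl_id[OF \<open>trans r\<close>] unfolding acyclic_def by blast
  then show ?thesis
    using that unfolding r_def by blast
qed

definition bi_ideal :: "'a set \<Rightarrow> bool" where
  "bi_ideal I \<longleftrightarrow> I \<subseteq> S \<and>
     (\<forall>x\<in>I. \<forall>c\<in>S. add c x \<in> I \<and> add x c \<in> I \<and> mul c x \<in> I \<and> mul x c \<in> I)"

definition sumset :: "'a set" where
  "sumset = {add x y | x y. x \<in> S \<and> y \<in> S}"

lemma bi_ideal_sumset: "bi_ideal sumset"
proof -
  have "mul c z \<in> sumset \<and> mul z c \<in> sumset" if "z \<in> sumset" "c \<in> S" for z c
  proof -
    obtain x y where xy: "x \<in> S" "y \<in> S" and "z = add x y"
      using \<open>z \<in> sumset\<close> unfolding sumset_def by blast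
    then have "mul c z = add (mul c x) (mul c y)" "mul z c = add (mul x c) (mul y c)"
      using \<open>c \<in> S\<close> by (simp_all add: distrib_left distrib_right)
    then show ?thesis
      using xy \<open>c \<in> S\<close> mul_closed unfolding sumset_def by blast
  qed
  moreover have "sumset \<subseteq> S"
    unfolding sumset_def by (auto simp: add_closed)
  ultimately show ?thesis
    unfolding bi_ideal_def sumset_def by blast
qed

lemma semiring_congruence_rees:
  assumes "bi_ideal I"
  shows "semiring_congruence S add mul (Id_on S \<union> I \<times> I)"
proof -
  have "I \<subseteq> S"
    and absorb: "\<And>x c. x \<in> I \<Longrightarrow> c \<in> S \<Longrightarrow> add c x \<in> I \<and> add x c \<in> I \<and> mul c x \<in> I \<and> mul x c \<in> I"
    using assms unfolding bi_ideal_def by blast+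
  then have "equiv S (Id_on S \<union> I \<times> I)"
    unfolding equiv_def refl_on_def sym_def trans_def by blast
  moreover have "(add c x1, add c x2) \<in> Id_on S \<union> I \<times> I \<and> (add x1 c, add x2 c) \<in> Id_on S \<union> I \<times> I \<and>
      (mul c x1, mul c x2) \<in> Id_on S \<union> I \<times> I \<and> (mul x1 c, mul x2 c) \<in> Id_on S \<union> I \<times> I"
    if "(x1, x2) \<in> Id_on S \<union> I \<times> I" "c \<in> S" for x1 x2 c
  proof -
    from that(1) consider "x1 = x2" "x1 \<in> S" | "x1 \<in> I" "x2 \<in> I"
      by blast
    then show ?thesis
    proof cases
      case 1
      then show ?thesis using \<open>c \<in> S\<close> by (simp add: Id_on_iff add_closed mul_closed)
    next
      case 2
      then show ?thesis using absorb \<open>c \<in> S\<close> by blast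
    qed
  qed
  ultimately show ?thesis
    unfolding semiring_congruence_def by blast
qed

lemma bi_ideal_subsingleton_or_carrier:
  assumes "congruence_simple S add mul" "bi_ideal I"
  shows "(\<forall>x\<in>I. \<forall>y\<in>I. x = y) \<or> I = S"
proof -
  have "I \<subseteq> S"
    using assms(2) unfolding bi_ideal_def by blast
  have "Id_on S \<union> I \<times> I = Id_on S \<or> Id_on S \<union> I \<times> I = S \<times> S"
    using assms semiring_congruence_rees unfolding congruence_simple_def by blast
  then show ?thesis
  proof
    assume "Id_on S \<union> I \<times> I = Id_on S"
    then have "I \<times> I \<subseteq> Id_on S"
      by blast
    then show ?thesis
      by blast
  next
    assume full: "Id_on S \<union> I \<times> I = S \<times> S"
    have "y = x" if "x \<in> S - I" "y \<in> S" for x y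
    proof -
      have "(x, y) \<in> Id_on S \<union> I \<times> I"
        using full that by blast
      then show ?thesis
        using that(1) by blast
    qed
    then show ?thesis
      using \<open>I \<subseteq> S\<close> by blast
  qed
qed

lemma add_eq_infinity_if_sumset_subsingleton:
  assumes "is_infinity S add mul w" "\<forall>x\<in>sumset. \<forall>y\<in>sumset. x = y"
  shows "\<forall>x\<in>S. \<forall>y\<in>S. add x y = w"
proof (intro ballI)
  fix x y
  assume "x \<in> S" "y \<in> S"
  then have "add x y \<in> sumset"
    unfolding sumset_def by blast
  moreover have "w = add w w" "w \<in> S"
    using assms(1) unfolding is_infinity_def by auto
  then have "w \<in> sumset"
    unfolding sumset_def by blast
  ultimately show "add x y = w"
    using assms(2) by blast
qed

lemma carrier_eq_infinity_if_multiple_eq_infinity: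
  assumes "finite S" "is_infinity S add mul w" "sumset = S"
    and nil: "\<And>t. t \<in> S \<Longrightarrow> multiple N t = w"
  shows "S = {w}"
proof (rule ccontr)
  assume "S \<noteq> {w}"
  have "w \<in> S" and absorb: "\<And>v. v \<in> S \<Longrightarrow> add w v = w \<and> add v w = w"
    using assms(2) unfolding is_infinity_def by blast+
  with \<open>S \<noteq> {w}\<close> have nonempty: "S - {w} \<noteq> {}"
    by blast
  have split: "\<exists>u\<in>S. \<exists>v\<in>S - {w}. x = add u v" if "x \<in> S - {w}" for x
  proof -
    have "x \<in> sumset"
      using that \<open>sumset = S\<close> by simp
    then obtain u v where "u \<in> S" "v \<in> S" "x = add u v"
      unfolding sumset_def by blast
    moreover have "v \<noteq> w"
      using calculation that absorb by auto
    ultimately show ?thesis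
      by blast
  qed
  obtain x t where "x \<in> S - {w}" "t \<in> S" "x = add t x"
    using exists_add_fixed_point[OF finite_Diff[OF \<open>finite S\<close>] Diff_subset nonempty split]
    by metis
  then have "x = add (multiple N t) x"
    by (intro fixed_by_add_multiple) auto
  then have "x = w"
    using nil absorb \<open>t \<in> S\<close> \<open>x \<in> S - {w}\<close> by simp
  with \<open>x \<in> S - {w}\<close> show False
    by blast
qed

lemma congruence_free_if_add_constant:
  assumes "congruence_simple S add mul" "w \<in> S" and add_const: "\<forall>x\<in>S. \<forall>y\<in>S. add x y = w"
  shows "congruence_free S mul"
  unfolding congruence_free_def
proof (intro allI impI)
  fix R
  assume R: "semigroup_congruence S mul R"
  then have "equiv S R"
    and mul_compat: "\<And>x1 x2 c. (x1, x2) \<in> R \<Longrightarrow> c \<in> S \<Longrightarrow> (mul c x1, mul c x2) \<in> R \<and> (mul x1 c, mul x2 c) \<in> R"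
    unfolding semigroup_congruence_def by blast+
  then have "R \<subseteq> S \<times> S" "(w, w) \<in> R"
    using \<open>w \<in> S\<close> unfolding equiv_def refl_on_def by blast+
  then have "(add c x1, add c x2) \<in> R \<and> (add x1 c, add x2 c) \<in> R"
    if "(x1, x2) \<in> R" "c \<in> S" for x1 x2 c
    using that add_const by auto
  then have "semiring_congruence S add mul R"
    using \<open>equiv S R\<close> mul_compat unfolding semiring_congruence_def by blast
  then show "R = Id_on S \<or> R = S \<times> S"
    using assms(1) unfolding congruence_simple_def by blast
qed

end

locale add_comm_semiring_carrier = semiring_carrier +
  assumes add_commutative: "add_commutative_on S add"
begin

lemma add_commute: "x \<in> S \<Longrightarrow> y \<in> S \<Longrightarrow> add x y = add y x"
  using add_commutative unfolding add_commutative_on_def by blast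

lemma add_left_commute: "x \<in> S \<Longrightarrow> y \<in> S \<Longrightarrow> z \<in> S \<Longrightarrow> add x (add y z) = add y (add x z)"
  by (metis add_assoc add_commute)

lemma multiple_add:
  assumes "x \<in> S" "y \<in> S"
  shows "multiple n (add x y) = add (multiple n x) (multiple n y)"
proof (induction n)
  case 0
  show ?case by simp
next
  case (Suc n)
  then show ?case
    using assms by (simp add: add_assoc add_left_commute add_closed multiple_closed)
qed

lemma multiple_kernel_congruence:
  "semiring_congruence S add mul {(x, y). x \<in> S \<and> y \<in> S \<and> multiple N x = multiple N y}"
  (is "semiring_congruence S add mul ?K")
proof -
  have "equiv S ?K"
    unfolding equiv_def refl_on_def sym_def trans_def by auto
  moreover have "(add c x1, add c x2) \<in> ?K \<and> (add x1 c, add x2 c) \<in> ?K \<and>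
      (mul c x1, mul c x2) \<in> ?K \<and> (mul x1 c, mul x2 c) \<in> ?K"
    if "(x1, x2) \<in> ?K" "c \<in> S" for x1 x2 c
    using that mul_multiple_left[symmetric, of _ c N] mul_multiple_right[symmetric, of _ c N]
    by (auto simp: add_closed mul_closed multiple_add)
  ultimately show ?thesis
    unfolding semiring_congruence_def by blast
qed

lemma add_idempotent_if_sumset_eq_carrier:
  assumes "finite S" "congruence_simple S add mul" "is_infinity S add mul w"
    and "sumset = S" "card S > 1"
  shows "\<forall>x\<in>S. add x x = x"
proof -
  obtain N where N_idem: "\<And>x. x \<in> S \<Longrightarrow> multiple N (multiple N x) = multiple N x"
    and N_add: "\<And>x. x \<in> S \<Longrightarrow> add (multiple N x) (multiple N x) = multiple N x"
    using exists_idempotent_multiple[OF \<open>finite S\<close>] by metis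
  let ?K = "{(x, y). x \<in> S \<and> y \<in> S \<and> multiple N x = multiple N y}"
  have "?K = Id_on S \<or> ?K = S \<times> S"
    using assms(2) multiple_kernel_congruence unfolding congruence_simple_def by blast
  then show ?thesis
  proof
    assume "?K = Id_on S"
    have "multiple N x = x" if "x \<in> S" for x
    proof -
      have "(multiple N x, x) \<in> ?K"
        using that N_idem multiple_closed by simp
      then show ?thesis
        using \<open>?K = Id_on S\<close> by auto
    qed
    then show ?thesis
      using N_add by simp
  next
    assume "?K = S \<times> S"
    have "w \<in> S"
      using assms(3) unfolding is_infinity_def by blast
    have "multiple N t = w" if "t \<in> S" for t
    proof -
      have "(t, w) \<in> ?K"
        using \<open>?K = S \<times> S\<close> that \<open>w \<in> S\<close> by simp
      then show ?thesis
        using multiple_infinity[OF assms(3)] by simp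
    qed
    then have "S = {w}"
      using carrier_eq_infinity_if_multiple_eq_infinity assms(1,3,4) by blast
    then show ?thesis
      using \<open>card S > 1\<close> by simp
  qed
qed

end

theorem lemma3p1:
  fixes S :: "'a set" and add mul :: "'a \<Rightarrow> 'a \<Rightarrow> 'a" and inf :: 'a
  assumes "semiring_on S add mul"
    and "finite S"
    and "add_commutative_on S add"
    and "congruence_simple S add mul"
    and "is_infinity S add mul inf"
    and "card S > 2"
  shows "(\<forall>x\<in>S. add x x = x) \<or>
         ((\<forall>x\<in>S. \<forall>y\<in>S. add x y = inf) \<and> congruence_free S mul)"
proof -
  interpret add_comm_semiring_carrier S add mul
    using assms(1,3) by unfold_locales
  consider "\<forall>x\<in>sumset. \<forall>y\<in>sumset. x = y" | "sumset = S"
    using bi_ideal_subsingleton_or_carrier[OF assms(4) bi_ideal_sumset] by blast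
  then show ?thesis
  proof cases
    case 1
    then have "\<forall>x\<in>S. \<forall>y\<in>S. add x y = inf"
      using add_eq_infinity_if_sumset_subsingleton[OF assms(5)] by blast
    moreover have "inf \<in> S"
      using assms(5) unfolding is_infinity_def by blast
    ultimately show ?thesis
      using congruence_free_if_add_constant[OF assms(4)] by blast
  next
    case 2
    then show ?thesis
      using add_idempotent_if_sumset_eq_carrier[OF assms(2,4,5)] assms(6) by simp
  qed
qed

end
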